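(* Let $U, X, Y, Z$ be uncertain variables on a common set $\Omega$, with finite ranges, forming a Markov chain $U - X - Y - Z$. Then $\mathcal{L}(U\rightarrow Z)\leq \mathcal{L}(U\rightarrow Y)$.
   Context: Let $\Omega$ be a set. An uncertain variable (uv) is a map $X:\Omega\to\mathbb{X}$ into some set; all uvs considered have finite ranges. The range of $X$ is $[\![X]\!]:=\{X(\omega):\omega\in\Omega\}$; the joint range of $X,Y$ is $[\![X,Y]\!]:=\{(X(\omega),Y(\omega)):\omega\in\Omega\}$; the conditional range is $[\![X\mid Y(\omega)=y]\!]:=\{X(\omega):\omega\in\Omega,\ Y(\omega)=y\}$, and similarly $[\![X\mid Z(\omega)=z,Y(\omega)=y]\!]:=\{X(\omega):\omega\in\Omega,\ Z(\omega)=z,\ Y(\omega)=y\}$. Uvs $X$ and $Y$ are unrelated if $[\![X\mid Y(\omega)=y]\!]=[\![X]\!]$ for all $y\in[\![Y]\!]$ and $[\![Y\mid X(\omega)=x]\!]=[\![Y]\!]$ for all $x\in[\![X]\!]$. Uvs $X,Y,Z$ form a Markov chain $X-Y-Z$ if $[\![X\mid Z(\omega)=z,Y(\omega)=y]\!]=[\![X\mid Y(\omega)=y]\!]$ for all $(z,y)\in[\![Z,Y]\!]$; $X_1-X_2-\cdots-X_n$ is a Markov chain if $X_i-X_j-X_\ell$ is a Markov chain for all $1\le i<j<\ell\le n$. The non-stochastic brute-force guessing leakage from a uv $U$ to a uv $Y$ is $$\mathcal{L}(U\rightarrow Y):=\log_2\left(\frac{|[\![U]\!]|}{\min_{y\in[\![Y]\!]}|[\![U\mid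 Y(\omega)=y]\!]|}\right)=\max_{y\in[\![Y]\!]}\log_2\left(\frac{|[\![U]\!]|}{|[\![U\mid Y(\omega)=y]\!]|}\right).$$ *)

theory Defs
  imports Complex_Main
begin

text \<open>Uncertain variables are functions on a common sample set \<Omega> (a carrier set).\<close>

definition urange :: "'o set \<Rightarrow> ('o \<Rightarrow> 'a) \<Rightarrow> 'a set" where
  "urange \<Omega> X = X ` \<Omega>"

definition ujrange :: "'o set \<Rightarrow> ('o \<Rightarrow> 'a) \<Rightarrow> ('o \<Rightarrow> 'b) \<Rightarrow> ('a \<times> 'b) set" where
  "ujrange \<Omega> X Y = (\<lambda>\<omega>. (X \<omega>, Y \<omega>)) ` \<Omega>"

definition ucrange :: "'o set \<Rightarrow> ('o \<Rightarrow> 'a) \<Rightarrow> ('o \<Rightarrow> 'b) \<Rightarrow> 'b \<Rightarrow> 'a set" where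
  "ucrange \<Omega> X Y y = {X \<omega> | \<omega>. \<omega> \<in> \<Omega> \<and> Y \<omega> = y}"

definition ucrange2 :: "'o set \<Rightarrow> ('o \<Rightarrow> 'a) \<Rightarrow> ('o \<Rightarrow> 'c) \<Rightarrow> 'c \<Rightarrow> ('o \<Rightarrow> 'b) \<Rightarrow> 'b \<Rightarrow> 'a set" where
  "ucrange2 \<Omega> X Z z Y y = {X \<omega> | \<omega>. \<omega> \<in> \<Omega> \<and> Z \<omega> = z \<and> Y \<omega> = y}"

definition markov3 :: "'o set \<Rightarrow> ('o \<Rightarrow> 'a) \<Rightarrow> ('o \<Rightarrow> 'b) \<Rightarrow> ('o \<Rightarrow> 'c) \<Rightarrow> bool" where
  "markov3 \<Omega> X Y Z \<longleftrightarrow>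
     (\<forall>(z, y) \<in> ujrange \<Omega> Z Y. ucrange2 \<Omega> X Z z Y y = ucrange \<Omega> X Y y)"

definition markov4 :: "'o set \<Rightarrow> ('o \<Rightarrow> 'u) \<Rightarrow> ('o \<Rightarrow> 'a) \<Rightarrow> ('o \<Rightarrow> 'b) \<Rightarrow> ('o \<Rightarrow> 'c) \<Rightarrow> bool" where
  "markov4 \<Omega> U X Y Z \<longleftrightarrow>
     markov3 \<Omega> U X Y \<and> markov3 \<Omega> U X Z \<and> markov3 \<Omega> U Y Z \<and> markov3 \<Omega> X Y Z"

definition leakage :: "'o set \<Rightarrow> ('o \<Rightarrow> 'u) \<Rightarrow> ('o \<Rightarrow> 'b) \<Rightarrow> real" where
  "leakage \<Omega> U Y =
     log 2 (real (card (urange \<Omega> U)) /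
            real (Min ((\<lambda>y. card (ucrange \<Omega> U Y y)) ` urange \<Omega> Y)))"

end

theory Submission
  imports Defs
begin

text \<open>Only the chain \<open>U - Y - Z\<close> matters: for every value \<open>z\<close> of \<open>Z\<close>, pick \<open>\<omega>\<close> with
  \<open>Z \<omega> = z\<close> and put \<open>y = Y \<omega>\<close>. By the Markov property, observing \<open>y\<close> alone leaves exactly
  the values of \<open>U\<close> compatible with observing both \<open>z\<close> and \<open>y\<close>, so it narrows \<open>U\<close> down at
  least as much as observing \<open>z\<close>. Hence the smallest conditional range of \<open>U\<close> given \<open>Y\<close> is
  no larger than the smallest one given \<open>Z\<close>, and the leakage is antitone in that minimum.\<close>

definition min_ucard :: "'o set \<Rightarrow> ('o \<Rightarrow> 'u) \<Rightarrow> ('o \<Rightarrow> 'b) \<Rightarrow> nat" where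
  "min_ucard \<Omega> U Y = Min ((\<lambda>y. card (ucrange \<Omega> U Y y)) ` urange \<Omega> Y)"

lemma leakage_eq_min_ucard:
  "leakage \<Omega> U Y = log 2 (real (card (urange \<Omega> U)) / real (min_ucard \<Omega> U Y))"
  unfolding leakage_def min_ucard_def ..

lemma ucrange_subset_urange: "ucrange \<Omega> U Y y \<subseteq> urange \<Omega> U"
  unfolding ucrange_def urange_def by auto

lemma finite_ucrange: "finite (urange \<Omega> U) \<Longrightarrow> finite (ucrange \<Omega> U Y y)"
  using ucrange_subset_urange finite_subset by metis

lemma ucrange_nonempty: "y \<in> urange \<Omega> Y \<Longrightarrow> ucrange \<Omega> U Y y \<noteq> {}"
  unfolding ucrange_def urange_def by auto

lemma urange_nonempty: "\<Omega> \<noteq> {} \<Longrightarrow> urange \<Omega> Y \<noteq> {}"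
  unfolding urange_def by simp

lemma min_ucard_attained:
  assumes "\<Omega> \<noteq> {}" "finite (urange \<Omega> Y)"
  obtains y where "y \<in> urange \<Omega> Y" "min_ucard \<Omega> U Y = card (ucrange \<Omega> U Y y)"
proof -
  have "min_ucard \<Omega> U Y \<in> (\<lambda>y. card (ucrange \<Omega> U Y y)) ` urange \<Omega> Y"
    unfolding min_ucard_def using assms urange_nonempty[OF assms(1)] by (intro Min_in) auto
  then show ?thesis using that by blast
qed

lemma min_ucard_le:
  "finite (urange \<Omega> Y) \<Longrightarrow> y \<in> urange \<Omega> Y \<Longrightarrow> min_ucard \<Omega> U Y \<le> card (ucrange \<Omega> U Y y)"
  unfolding min_ucard_def by simp

lemma min_ucard_pos:
  assumes "\<Omega> \<noteq> {}" "finite (urange \<Omega> U)" "finite (urange \<Omega> Y)"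
  shows "0 < min_ucard \<Omega> U Y"
proof -
  obtain y where "y \<in> urange \<Omega> Y" "min_ucard \<Omega> U Y = card (ucrange \<Omega> U Y y)"
    using min_ucard_attained assms(1,3) .
  then show ?thesis
    using finite_ucrange[OF assms(2)] ucrange_nonempty[of y \<Omega> Y U] by (simp add: card_gt_0_iff)
qed

lemma markov3_ucrange_refines:
  assumes "markov3 \<Omega> U Y Z" "z \<in> urange \<Omega> Z"
  obtains y where "y \<in> urange \<Omega> Y" "ucrange \<Omega> U Y y \<subseteq> ucrange \<Omega> U Z z"
proof -
  obtain \<omega> where \<omega>: "\<omega> \<in> \<Omega>" "Z \<omega> = z"
    using assms(2) unfolding urange_def by auto
  have "(z, Y \<omega>) \<in> ujrange \<Omega> Z Y"
    using \<omega> unfolding ujrange_def by auto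
  then have "ucrange \<Omega> U Y (Y \<omega>) = ucrange2 \<Omega> U Z z Y (Y \<omega>)"
    using assms(1) unfolding markov3_def by auto
  also have "\<dots> \<subseteq> ucrange \<Omega> U Z z"
    unfolding ucrange2_def ucrange_def by auto
  finally show ?thesis
    using that \<omega>(1) unfolding urange_def by blast
qed

lemma min_ucard_mono_refines:
  assumes "\<Omega> \<noteq> {}" "finite (urange \<Omega> U)"
    and "finite (urange \<Omega> Y)" "finite (urange \<Omega> Z)"
    and refines: "\<And>z. z \<in> urange \<Omega> Z \<Longrightarrow>
                   \<exists>y \<in> urange \<Omega> Y. ucrange \<Omega> U Y y \<subseteq> ucrange \<Omega> U Z z"
  shows "min_ucard \<Omega> U Y \<le> min_ucard \<Omega> U Z"
proof -
  obtain z where z: "z \<in> urange \<Omega> Z" "min_ucard \<Omega> U Z = card (ucrange \<Omega> U Z z)"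
    using min_ucard_attained assms(1,4) .
  obtain y where y: "y \<in> urange \<Omega> Y" "ucrange \<Omega> U Y y \<subseteq> ucrange \<Omega> U Z z"
    using refines[OF z(1)] by blast
  have "min_ucard \<Omega> U Y \<le> card (ucrange \<Omega> U Y y)"
    using min_ucard_le assms(3) y(1) .
  also have "\<dots> \<le> card (ucrange \<Omega> U Z z)"
    using y(2) finite_ucrange[OF assms(2)] by (rule card_mono[rotated])
  finally show ?thesis using z(2) by simp
qed

lemma leakage_antimono_min_ucard:
  assumes "\<Omega> \<noteq> {}" "finite (urange \<Omega> U)" "finite (urange \<Omega> Y)"
    and "min_ucard \<Omega> U Y \<le> min_ucard \<Omega> U Z"
  shows "leakage \<Omega> U Z \<le> leakage \<Omega> U Y"
proof -
  have "0 < min_ucard \<Omega> U Y"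
    using min_ucard_pos assms(1-3) .
  moreover have "0 < card (urange \<Omega> U)"
    using assms(1,2) urange_nonempty by (simp add: card_gt_0_iff)
  ultimately have "real (card (urange \<Omega> U)) / real (min_ucard \<Omega> U Z)
                   \<le> real (card (urange \<Omega> U)) / real (min_ucard \<Omega> U Y)"
    and "0 < real (card (urange \<Omega> U)) / real (min_ucard \<Omega> U Z)"
    using assms(4) by (auto intro: divide_left_mono)
  then show ?thesis
    unfolding leakage_eq_min_ucard by simp
qed

theorem proposition1:
  fixes \<Omega> :: "'o set"
    and U :: "'o \<Rightarrow> 'u" and X :: "'o \<Rightarrow> 'a" and Y :: "'o \<Rightarrow> 'b" and Z :: "'o \<Rightarrow> 'c"
  assumes "\<Omega> \<noteq> {}"
    and "finite (urange \<Omega> U)" and "finite (urange \<Omega> X)"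
    and "finite (urange \<Omega> Y)" and "finite (urange \<Omega> Z)"
    and "markov4 \<Omega> U X Y Z"
  shows "leakage \<Omega> U Z \<le> leakage \<Omega> U Y"
proof -
  have "markov3 \<Omega> U Y Z"
    using assms(6) unfolding markov4_def by simp
  then have "min_ucard \<Omega> U Y \<le> min_ucard \<Omega> U Z"
    using assms(1,2,4,5)
    by (intro min_ucard_mono_refines) (metis markov3_ucrange_refines)+
  then show ?thesis
    using assms(1,2,4) by (rule leakage_antimono_min_ucard[rotated 3])
qed

end
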